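(* Let $\mathbb{F}$ be a field of characteristic $2$ and $n\ge 1$. Let $A \in \operatorname{M}_n(\mathbb{F})$ be an invertible alternating matrix, and set $S := \begin{bmatrix} 1 & 0_{1\times n} \\ 0_{n\times 1} & A\end{bmatrix}$. Let $M \in \operatorname{M}_n(\mathbb{F})$ be nilpotent and $A$-symmetric. Then the following are equivalent: (i) $M$ is $A$-alternating; (ii) for every $X \in \mathbb{F}^n$, the matrix $M_X := \begin{bmatrix} 0 & X^T A^T \\ X & M \end{bmatrix} \in \operatorname{M}_{n+1}(\mathbb{F})$ is nilpotent. Moreover, if (i) holds then $M_X$ is $S$-alternating for every $X \in \mathbb{F}^n$.
   Context: A square matrix $A$ is alternating if $X^T A X = 0$ for all column vectors $X$ (in characteristic $2$: symmetric with zero diagonal). Given square matrices $B$ and $M$ of the same size, $M$ is $B$-symmetric (resp. $B$-alternating) if $BM$ is symmetric (resp. alternating). *)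

theory Defs
  imports "Jordan_Normal_Form.Matrix"
begin

definition alternating_mat :: "'a::comm_ring_1 mat \<Rightarrow> bool" where
  "alternating_mat A \<longleftrightarrow> square_mat A \<and>
     (\<forall>X \<in> carrier_vec (dim_row A). X \<bullet> (A *\<^sub>v X) = 0)"

definition symmetric_mat :: "'a mat \<Rightarrow> bool" where
  "symmetric_mat A \<longleftrightarrow> transpose_mat A = A"

definition B_symmetric :: "'a::semiring_0 mat \<Rightarrow> 'a mat \<Rightarrow> bool" where
  "B_symmetric B M \<longleftrightarrow> symmetric_mat (B * M)"

definition B_alternating :: "'a::comm_ring_1 mat \<Rightarrow> 'a mat \<Rightarrow> bool" where
  "B_alternating B M \<longleftrightarrow> alternating_mat (B * M)"

definition nilpotent_mat :: "'a::semiring_1 mat \<Rightarrow> bool" where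
  "nilpotent_mat M \<longleftrightarrow> (\<exists>k. M ^\<^sub>m k = 0\<^sub>m (dim_row M) (dim_col M))"

definition col_mat :: "'a vec \<Rightarrow> 'a mat" where
  "col_mat X = mat_of_cols (dim_vec X) [X]"

definition MX :: "'a::semiring_1 mat \<Rightarrow> 'a mat \<Rightarrow> 'a vec \<Rightarrow> 'a mat" where
  "MX A M X = four_block_mat (0\<^sub>m 1 1) (transpose_mat (col_mat X) * transpose_mat A)
                            (col_mat X) M"

end

(*
  Write b = A X, so that M_X (s, v) = (b . v, s X + M v), and consider the moments
  c_j = b . (M^j X) = X^T A M^j X.  In characteristic 2 the alternating matrix A is symmetric,
  so M is A-self-adjoint and c_(2i) = q_A (M^i X) = 0, c_(2i+1) = q_AM (M^i X), where
  q_B v = v^T B v.  If AM is alternating, every moment vanishes; then M_X^(j+1) e = (0, M^j X)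
  for e = (1, 0), and M_X is nilpotent together with M.  If AM is not alternating, pick X and
  the largest r with q_AM (M^r X) <> 0: for Y = M^r X the only nonzero moment is c_1, so the
  first entry of M_Y^(3i) e is c_1^i and M_Y is not nilpotent.  Finally, for u = (s, v) one
  computes u^T S M_X u = 2 s (X^T A v) + v^T A M v, which vanishes when AM is alternating.
*)

theory Submission
  imports Defs
begin

lemma smult_zero_vec [simp]: "(c :: 'a::mult_zero) \<cdot>\<^sub>v 0\<^sub>v n = 0\<^sub>v n"
  by (rule eq_vecI) auto

lemma zero_smult_vec [simp]: "(0 :: 'a::mult_zero) \<cdot>\<^sub>v v = 0\<^sub>v (dim_vec v)"
  by (rule eq_vecI) auto

lemma mult_mat_zero_vec [simp]: "A *\<^sub>v 0\<^sub>v n = (0\<^sub>v (dim_row A) :: 'a::semiring_0 vec)"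
  by (rule eq_vecI) (auto simp: scalar_prod_def)

lemma zero_mat_mult_vec [simp]:
  "v \<in> carrier_vec n \<Longrightarrow> 0\<^sub>m m n *\<^sub>v v = (0\<^sub>v m :: 'a::semiring_0 vec)"
  by (rule eq_vecI) auto

lemma mult_mat_smult_vec:
  fixes A :: "'a::comm_semiring_0 mat"
  assumes "A \<in> carrier_mat m n" and "v \<in> carrier_vec n"
  shows "A *\<^sub>v (c \<cdot>\<^sub>v v) = c \<cdot>\<^sub>v (A *\<^sub>v v)"
  using assms by (intro eq_vecI) auto

lemma zero_matI:
  fixes B :: "'a::semiring_1 mat"
  assumes "B \<in> carrier_mat m k" and "\<And>u. u \<in> carrier_vec k \<Longrightarrow> B *\<^sub>v u = 0\<^sub>v m"
  shows "B = 0\<^sub>m m k"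
proof (rule eq_matI)
  fix i j assume "i < dim_row (0\<^sub>m m k)" "j < dim_col (0\<^sub>m m k)"
  then show "B $$ (i, j) = 0\<^sub>m m k $$ (i, j)"
    using assms(1) assms(2)[of "unit_vec k j"] by (simp add: vec_eq_iff)
qed (use assms(1) in auto)

lemma pow_mat_add:
  assumes "A \<in> carrier_mat n n"
  shows "A ^\<^sub>m (a + b) = A ^\<^sub>m a * A ^\<^sub>m b"
  using assms by (induction b) (auto simp: assoc_mult_mat[of _ n n _ n _ n])

lemma pow_mat_mult_vec_carrier [simp]:
  "A \<in> carrier_mat n n \<Longrightarrow> v \<in> carrier_vec n \<Longrightarrow> A ^\<^sub>m k *\<^sub>v v \<in> carrier_vec n"
  by (metis mult_mat_vec_carrier pow_carrier_mat)

lemma pow_mat_add_mult_vec: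
  assumes "A \<in> carrier_mat n n" and "v \<in> carrier_vec n"
  shows "A ^\<^sub>m (a + b) *\<^sub>v v = A ^\<^sub>m a *\<^sub>v (A ^\<^sub>m b *\<^sub>v v)"
  using assms by (simp add: pow_mat_add assoc_mult_mat_vec[of _ n n _ n] del: pow_mat.simps)

lemma pow_mat_Suc_mult_vec:
  assumes "A \<in> carrier_mat n n" and "v \<in> carrier_vec n"
  shows "A ^\<^sub>m Suc k *\<^sub>v v = A *\<^sub>v (A ^\<^sub>m k *\<^sub>v v)"
  using pow_mat_add_mult_vec[OF assms, of 1 k] assms by simp

lemma pow_mat_mult_vec_linear:
  fixes N :: "'a::comm_semiring_1 mat"
  assumes "N \<in> carrier_mat n n" "u \<in> carrier_vec n" "w \<in> carrier_vec n"
  shows "N ^\<^sub>m k *\<^sub>v (c \<cdot>\<^sub>v u + w) = c \<cdot>\<^sub>v (N ^\<^sub>m k *\<^sub>v u) + N ^\<^sub>m k *\<^sub>v w"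
  using assms mult_mat_smult_vec[OF pow_carrier_mat[OF assms(1)] assms(2)]
  by (simp add: mult_add_distrib_mat_vec[of _ n n] del: pow_mat.simps)

lemma vCons_add:
  "dim_vec v = dim_vec w \<Longrightarrow> vCons a v + vCons b w = vCons (a + b) (v + w)"
  by (rule eq_vecI) (auto simp: vec_index_vCons)

lemma smult_vCons: "c \<cdot>\<^sub>v vCons a v = vCons (c * a) (c \<cdot>\<^sub>v v)"
  by (rule eq_vecI) (auto simp: vec_index_vCons)

lemma vCons_eq_unit_plus: "vCons s v = s \<cdot>\<^sub>v vCons 1 (0\<^sub>v (dim_vec v)) + vCons (0::'a::semiring_1) v"
  by (rule eq_vecI) (auto simp: vec_index_vCons)

lemma four_block_mat_mult_vCons:
  fixes P B C D :: "'a::comm_semiring_1 mat"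
  assumes "P \<in> carrier_mat 1 1" "B \<in> carrier_mat 1 n" "C \<in> carrier_mat n 1" "D \<in> carrier_mat n n"
    and "v \<in> carrier_vec n"
  shows "four_block_mat P B C D *\<^sub>v vCons s v
    = vCons (P $$ (0,0) * s + row B 0 \<bullet> v) (s \<cdot>\<^sub>v col C 0 + D *\<^sub>v v)"
proof -
  let ?N = "four_block_mat P B C D"
  have row_0: "row ?N 0 = vCons (P $$ (0,0)) (row B 0)"
    using assms by (intro eq_vecI) (auto simp: vec_index_vCons)
  have row_Suc: "row ?N (Suc k) = vCons (C $$ (k,0)) (row D k)" if "k < n" for k
    using assms that by (intro eq_vecI) (auto simp: vec_index_vCons)
  show ?thesis
  proof (rule eq_vecI)
    fix i assume "i < dim_vec (vCons (P $$ (0,0) * s + row B 0 \<bullet> v) (s \<cdot>\<^sub>v col C 0 + D *\<^sub>v v))"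
    then show "(?N *\<^sub>v vCons s v) $ i = vCons (P $$ (0,0) * s + row B 0 \<bullet> v) (s \<cdot>\<^sub>v col C 0 + D *\<^sub>v v) $ i"
      using assms row_0 row_Suc by (cases i) (auto simp: mult.commute)
  qed (use assms in auto)
qed

lemma col_mat_carrier: "x \<in> carrier_vec n \<Longrightarrow> col_mat x \<in> carrier_mat n 1"
  by (simp add: col_mat_def mat_of_cols_def)

lemma col_col_mat: "col (col_mat x) 0 = x"
  by (simp add: col_mat_def)

definition bordered_mat :: "'a::zero vec \<Rightarrow> 'a vec \<Rightarrow> 'a mat \<Rightarrow> 'a mat" where
  "bordered_mat b x M = four_block_mat (0\<^sub>m 1 1) (mat_of_row b) (col_mat x) M"

lemma bordered_mat_carrier:
  assumes "b \<in> carrier_vec n" "x \<in> carrier_vec n" "M \<in> carrier_mat n n"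
  shows "bordered_mat b x M \<in> carrier_mat (Suc n) (Suc n)"
  using assms col_mat_carrier[OF assms(2)] four_block_carrier_mat[of "0\<^sub>m 1 1" 1 1 M n n]
  by (simp add: bordered_mat_def)

lemma bordered_mat_mult_vCons:
  fixes M :: "'a::comm_semiring_1 mat"
  assumes "b \<in> carrier_vec n" "x \<in> carrier_vec n" "M \<in> carrier_mat n n" "v \<in> carrier_vec n"
  shows "bordered_mat b x M *\<^sub>v vCons s v = vCons (b \<bullet> v) (s \<cdot>\<^sub>v x + M *\<^sub>v v)"
  unfolding bordered_mat_def
  using assms col_mat_carrier[OF assms(2)]
  by (subst four_block_mat_mult_vCons) (auto simp: col_col_mat)

lemma bordered_mat_mult_vCons_0:
  fixes M :: "'a::comm_semiring_1 mat"
  assumes "b \<in> carrier_vec n" "x \<in> carrier_vec n" "M \<in> carrier_mat n n" "v \<in> carrier_vec n"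
  shows "bordered_mat b x M *\<^sub>v vCons 0 v = (b \<bullet> v) \<cdot>\<^sub>v vCons 1 (0\<^sub>v n) + vCons 0 (M *\<^sub>v v)"
  using assms by (simp add: bordered_mat_mult_vCons smult_vCons vCons_add)

lemma MX_eq_bordered_mat:
  fixes A :: "'a::comm_semiring_1 mat"
  assumes "A \<in> carrier_mat n n" "X \<in> carrier_vec n"
  shows "MX A M X = bordered_mat (A *\<^sub>v X) X M"
proof -
  have "transpose_mat (col_mat X) * transpose_mat A = mat_of_row (A *\<^sub>v X)"
    using assms by (intro eq_matI)
      (auto simp: col_mat_def transpose_mat_of_cols mat_of_row_def comm_scalar_prod[of _ n])
  then show ?thesis by (simp add: MX_def bordered_mat_def)
qed

lemma bordered_mat_pow_mult_unit:
  fixes M :: "'a::comm_semiring_1 mat"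
  assumes b: "b \<in> carrier_vec n" and x: "x \<in> carrier_vec n" and M: "M \<in> carrier_mat n n"
    and orth: "\<And>j. j < k \<Longrightarrow> b \<bullet> (M ^\<^sub>m j *\<^sub>v x) = 0"
  shows "bordered_mat b x M ^\<^sub>m Suc k *\<^sub>v vCons 1 (0\<^sub>v n) = vCons 0 (M ^\<^sub>m k *\<^sub>v x)"
  using orth
proof (induction k)
  case 0
  show ?case
    using b x M bordered_mat_carrier[OF b x M] by (simp add: bordered_mat_mult_vCons)
next
  case (Suc k)
  let ?N = "bordered_mat b x M"
  have N: "?N \<in> carrier_mat (Suc n) (Suc n)" by (rule bordered_mat_carrier[OF b x M])
  have "?N ^\<^sub>m Suc (Suc k) *\<^sub>v vCons 1 (0\<^sub>v n) = ?N *\<^sub>v (?N ^\<^sub>m Suc k *\<^sub>v vCons 1 (0\<^sub>v n))"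
    by (rule pow_mat_Suc_mult_vec[OF N]) simp
  also have "\<dots> = ?N *\<^sub>v vCons 0 (M ^\<^sub>m k *\<^sub>v x)"
    using Suc by simp
  also have "\<dots> = vCons 0 (M *\<^sub>v (M ^\<^sub>m k *\<^sub>v x))"
    using Suc.prems[of k] b x M by (simp add: bordered_mat_mult_vCons)
  also have "M *\<^sub>v (M ^\<^sub>m k *\<^sub>v x) = M ^\<^sub>m Suc k *\<^sub>v x"
    by (rule pow_mat_Suc_mult_vec[OF M x, symmetric])
  finally show ?case .
qed

lemma bordered_mat_pow_eq_zero:
  fixes M :: "'a::comm_semiring_1 mat"
  assumes b: "b \<in> carrier_vec n" and x: "x \<in> carrier_vec n" and M: "M \<in> carrier_mat n n"
    and M_pow: "M ^\<^sub>m m = 0\<^sub>m n n" and orth: "\<And>j. b \<bullet> (M ^\<^sub>m j *\<^sub>v x) = 0"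
  shows "bordered_mat b x M ^\<^sub>m (m + Suc m) = 0\<^sub>m (Suc n) (Suc n)"
proof -
  let ?N = "bordered_mat b x M" and ?e = "vCons 1 (0\<^sub>v n) :: 'a vec"
  have N: "?N \<in> carrier_mat (Suc n) (Suc n)" by (rule bordered_mat_carrier[OF b x M])
  have N_zero: "?N ^\<^sub>m k *\<^sub>v 0\<^sub>v (Suc n) = 0\<^sub>v (Suc n)" for k
    using N by simp
  have unit: "?N ^\<^sub>m (r + Suc m) *\<^sub>v ?e = 0\<^sub>v (Suc n)" for r
    using pow_mat_add_mult_vec[OF N, of ?e r "Suc m"] bordered_mat_pow_mult_unit[OF b x M orth]
      M_pow x N_zero by (simp add: zero_vec_Suc)
  have tail: "?N ^\<^sub>m (r + Suc m) *\<^sub>v vCons 0 v = 0\<^sub>v (Suc n)"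
    if "v \<in> carrier_vec n" "M ^\<^sub>m r *\<^sub>v v = 0\<^sub>v n" for r v
    using that
  proof (induction r arbitrary: v)
    case 0
    then have "v = 0\<^sub>v n" using M by simp
    then show ?case using N_zero by (simp add: zero_vec_Suc del: pow_mat.simps)
  next
    case (Suc r)
    have Mv: "M *\<^sub>v v \<in> carrier_vec n" using M Suc.prems by simp
    have "M ^\<^sub>m r *\<^sub>v (M *\<^sub>v v) = 0\<^sub>v n"
      using pow_mat_add_mult_vec[OF M Suc.prems(1), of r 1] Suc.prems(2) M by simp
    then have IH: "?N ^\<^sub>m (r + Suc m) *\<^sub>v vCons 0 (M *\<^sub>v v) = 0\<^sub>v (Suc n)"
      using Suc.IH[OF Mv] by simp
    have "?N ^\<^sub>m (Suc r + Suc m) *\<^sub>v vCons 0 v = ?N ^\<^sub>m (r + Suc m) *\<^sub>v (?N *\<^sub>v vCons 0 v)"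
      using pow_mat_add_mult_vec[OF N, of "vCons 0 v" "r + Suc m" 1] N Suc.prems(1) by simp
    also have "\<dots> = ?N ^\<^sub>m (r + Suc m) *\<^sub>v ((b \<bullet> v) \<cdot>\<^sub>v ?e + vCons 0 (M *\<^sub>v v))"
      by (simp add: bordered_mat_mult_vCons_0[OF b x M Suc.prems(1)])
    also have "\<dots> = 0\<^sub>v (Suc n)"
      using pow_mat_mult_vec_linear[OF N, of ?e "vCons 0 (M *\<^sub>v v)"] Mv unit IH
      by (simp del: pow_mat.simps)
    finally show ?case .
  qed
  show ?thesis
  proof (rule zero_matI)
    fix u :: "'a vec" assume "u \<in> carrier_vec (Suc n)"
    then obtain s v where u: "u = vCons s v" and v: "v \<in> carrier_vec n"
      by (cases u) auto
    have "?N ^\<^sub>m (m + Suc m) *\<^sub>v u = s \<cdot>\<^sub>v (?N ^\<^sub>m (m + Suc m) *\<^sub>v ?e) + ?N ^\<^sub>m (m + Suc m) *\<^sub>v vCons 0 v"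
      using u v vCons_eq_unit_plus[of s v] pow_mat_mult_vec_linear[OF N, of ?e "vCons 0 v"]
      by (simp del: pow_mat.simps)
    then show "?N ^\<^sub>m (m + Suc m) *\<^sub>v u = 0\<^sub>v (Suc n)"
      using unit[of m] tail[OF v, of m] M_pow v by simp
  qed (use N pow_carrier_mat in blast)
qed

lemma bordered_mat_not_nilpotent:
  fixes M :: "'a::idom mat"
  assumes b: "b \<in> carrier_vec n" and x: "x \<in> carrier_vec n" and M: "M \<in> carrier_mat n n"
    and orth_0: "b \<bullet> x = 0" and nonorth_1: "b \<bullet> (M *\<^sub>v x) \<noteq> 0"
    and orth_ge_2: "\<And>j. 2 \<le> j \<Longrightarrow> b \<bullet> (M ^\<^sub>m j *\<^sub>v x) = 0"
  shows "\<not> nilpotent_mat (bordered_mat b x M)"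
proof
  assume nilpotent: "nilpotent_mat (bordered_mat b x M)"
  let ?N = "bordered_mat b x M" and ?e = "vCons 1 (0\<^sub>v n) :: 'a vec"
  define \<gamma> where "\<gamma> = b \<bullet> (M *\<^sub>v x)"
  have N: "?N \<in> carrier_mat (Suc n) (Suc n)" by (rule bordered_mat_carrier[OF b x M])
  have N_vCons: "?N *\<^sub>v vCons 0 (M ^\<^sub>m j *\<^sub>v x) = vCons (b \<bullet> (M ^\<^sub>m j *\<^sub>v x)) (M ^\<^sub>m Suc j *\<^sub>v x)" for j
    using bordered_mat_mult_vCons[OF b x M, of "M ^\<^sub>m j *\<^sub>v x" 0] pow_mat_Suc_mult_vec[OF M x, of j] x M
    by simp
  have shift: "?N ^\<^sub>m k *\<^sub>v vCons 0 (M ^\<^sub>m j *\<^sub>v x) = vCons 0 (M ^\<^sub>m (k + j) *\<^sub>v x)" if "2 \<le> j" for k j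
    using that
  proof (induction k arbitrary: j)
    case 0
    then show ?case using N x M by simp
  next
    case (Suc k)
    have "?N ^\<^sub>m Suc k *\<^sub>v vCons 0 (M ^\<^sub>m j *\<^sub>v x) = ?N ^\<^sub>m k *\<^sub>v (?N *\<^sub>v vCons 0 (M ^\<^sub>m j *\<^sub>v x))"
      using pow_mat_add_mult_vec[OF N, of _ k 1] N x M by simp
    also have "\<dots> = vCons 0 (M ^\<^sub>m (Suc k + j) *\<^sub>v x)"
      using N_vCons[of j] orth_ge_2[OF Suc.prems] Suc.IH[of "Suc j"] Suc.prems by simp
    finally show ?case .
  qed
  \<comment> \<open>modulo the invariant span of the (0, M^j x), j \<ge> 2, whose first entries vanish, N^3 acts on e as \<gamma>\<close>
  have cube: "?N ^\<^sub>m 3 *\<^sub>v ?e = \<gamma> \<cdot>\<^sub>v ?e + vCons 0 (M ^\<^sub>m 2 *\<^sub>v x)"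
  proof -
    have "?N ^\<^sub>m 3 *\<^sub>v ?e = ?N *\<^sub>v (?N *\<^sub>v (?N *\<^sub>v ?e))"
      using pow_mat_Suc_mult_vec[OF N] N by (simp add: numeral_3_eq_3 del: pow_mat.simps(2))
    also have "?N *\<^sub>v ?e = vCons 0 x"
      using b x M by (simp add: bordered_mat_mult_vCons)
    also have "?N *\<^sub>v vCons 0 x = vCons 0 (M *\<^sub>v x)"
      using b x M orth_0 by (simp add: bordered_mat_mult_vCons)
    also have "?N *\<^sub>v vCons 0 (M *\<^sub>v x) = vCons \<gamma> (M ^\<^sub>m 2 *\<^sub>v x)"
      using b x M pow_mat_Suc_mult_vec[OF M x, of 1]
      by (simp add: bordered_mat_mult_vCons numeral_2_eq_2 \<gamma>_def)
    also have "\<dots> = \<gamma> \<cdot>\<^sub>v ?e + vCons 0 (M ^\<^sub>m 2 *\<^sub>v x)"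
      using x M by (simp add: smult_vCons vCons_add)
    finally show ?thesis .
  qed
  have first_entry: "(?N ^\<^sub>m (3 * i) *\<^sub>v ?e) $ 0 = \<gamma> ^ i" for i
  proof (induction i)
    case 0
    then show ?case using N by simp
  next
    case (Suc i)
    have "?N ^\<^sub>m (3 * Suc i) *\<^sub>v ?e = ?N ^\<^sub>m (3 * i) *\<^sub>v (\<gamma> \<cdot>\<^sub>v ?e + vCons 0 (M ^\<^sub>m 2 *\<^sub>v x))"
      using pow_mat_add_mult_vec[OF N, of ?e "3 * i" 3] cube by (simp add: add.commute del: pow_mat.simps)
    also have "\<dots> = \<gamma> \<cdot>\<^sub>v (?N ^\<^sub>m (3 * i) *\<^sub>v ?e) + vCons 0 (M ^\<^sub>m (3 * i + 2) *\<^sub>v x)"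
      using pow_mat_mult_vec_linear[OF N] shift[of 2] x M by (simp del: pow_mat.simps)
    finally show ?case
      using Suc.IH N by (simp del: pow_mat.simps)
  qed
  obtain K where K: "?N ^\<^sub>m K = 0\<^sub>m (Suc n) (Suc n)"
    using nilpotent N unfolding nilpotent_mat_def by auto
  have "?N ^\<^sub>m (2 * K + K) *\<^sub>v ?e = 0\<^sub>v (Suc n)"
    using pow_mat_add_mult_vec[OF N, of ?e "2 * K" K] K N by simp
  then have "\<gamma> ^ K = 0"
    using first_entry[of K] by (simp add: mult.commute)
  then show False
    using nonorth_1 by (simp add: \<gamma>_def)
qed

lemma alternating_mat_skew:
  fixes A :: "'a::comm_ring_1 mat"
  assumes alt: "alternating_mat A" and A: "A \<in> carrier_mat n n"
    and u: "u \<in> carrier_vec n" and w: "w \<in> carrier_vec n"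
  shows "u \<bullet> (A *\<^sub>v w) + w \<bullet> (A *\<^sub>v u) = 0"
proof -
  have q: "v \<bullet> (A *\<^sub>v v) = 0" if "v \<in> carrier_vec n" for v
    using alt A that unfolding alternating_mat_def by auto
  have Au: "A *\<^sub>v u \<in> carrier_vec n" and Aw: "A *\<^sub>v w \<in> carrier_vec n"
    using A u w by simp_all
  have "0 = (u + w) \<bullet> (A *\<^sub>v u + A *\<^sub>v w)"
    using q[of "u + w"] mult_add_distrib_mat_vec[OF A u w] u w by simp
  also have "\<dots> = u \<bullet> (A *\<^sub>v u) + u \<bullet> (A *\<^sub>v w) + (w \<bullet> (A *\<^sub>v u) + w \<bullet> (A *\<^sub>v w))"
    by (simp only: add_scalar_prod_distrib[OF u w] add_carrier_vec[OF Au Aw]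
        scalar_prod_add_distrib[OF u Au Aw] scalar_prod_add_distrib[OF w Au Aw])
  finally show ?thesis
    using q[OF u] q[OF w] by simp
qed

lemma alternating_mat_symmetric:
  fixes A :: "'a::comm_ring_1 mat"
  assumes char2: "CHAR('a) = 2" and alt: "alternating_mat A"
  shows "transpose_mat A = A"
proof -
  define n where "n = dim_row A"
  have A: "A \<in> carrier_mat n n"
    using alt unfolding alternating_mat_def n_def carrier_mat_def by simp
  show ?thesis
  proof (rule eq_matI)
    fix i j assume "i < dim_row A" "j < dim_col A"
    then have ij: "i < n" "j < n" using A by simp_all
    have "unit_vec n i \<bullet> (A *\<^sub>v unit_vec n j) + unit_vec n j \<bullet> (A *\<^sub>v unit_vec n i) = 0"
      by (rule alternating_mat_skew[OF alt A]) (use ij in simp_all)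
    moreover have "unit_vec n k \<bullet> (A *\<^sub>v unit_vec n l) = A $$ (k, l)" if "k < n" "l < n" for k l
      using A that by simp
    ultimately have "A $$ (i, j) + A $$ (j, i) = 0"
      using ij by simp
    then have "A $$ (j, i) = - A $$ (i, j)"
      by (simp add: eq_neg_iff_add_eq_0 add.commute)
    then show "transpose_mat A $$ (i, j) = A $$ (i, j)"
      using A ij uminus_CHAR_2[OF char2] by simp
  qed (use A in simp_all)
qed

lemma form_pow_mat_adjoint:
  fixes A M :: "'a::comm_semiring_1 mat"
  assumes A: "A \<in> carrier_mat n n" and M: "M \<in> carrier_mat n n"
    and A_sym: "transpose_mat A = A" and M_sym: "B_symmetric A M"
    and u: "u \<in> carrier_vec n" and w: "w \<in> carrier_vec n"
  shows "u \<bullet> (A *\<^sub>v (M ^\<^sub>m i *\<^sub>v w)) = (M ^\<^sub>m i *\<^sub>v u) \<bullet> (A *\<^sub>v w)"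
  using w
proof (induction i arbitrary: w)
  case 0
  then show ?case using u M by simp
next
  case (Suc i)
  have adjoint: "v \<bullet> (A *\<^sub>v (M *\<^sub>v w)) = (M *\<^sub>v v) \<bullet> (A *\<^sub>v w)"
    if "v \<in> carrier_vec n" "w \<in> carrier_vec n" for v w
  proof -
    have AM: "A * M \<in> carrier_mat n n" using A M by simp
    have "v \<bullet> (A *\<^sub>v (M *\<^sub>v w)) = (transpose_mat (A * M) *\<^sub>v v) \<bullet> w"
      using transpose_vec_mult_scalar[OF AM that(2,1)] A M that by simp
    also have "\<dots> = (transpose_mat A *\<^sub>v (M *\<^sub>v v)) \<bullet> w"
      using M_sym A_sym A M that by (simp add: B_symmetric_def symmetric_mat_def)
    also have "\<dots> = (M *\<^sub>v v) \<bullet> (A *\<^sub>v w)"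
      using transpose_vec_mult_scalar[OF A that(2)] M that by simp
    finally show ?thesis .
  qed
  have "u \<bullet> (A *\<^sub>v (M ^\<^sub>m Suc i *\<^sub>v w)) = (M ^\<^sub>m i *\<^sub>v u) \<bullet> (A *\<^sub>v (M *\<^sub>v w))"
    using Suc.IH[of "M *\<^sub>v w"] pow_mat_add_mult_vec[OF M Suc.prems, of i 1] M Suc.prems by simp
  also have "\<dots> = (M ^\<^sub>m Suc i *\<^sub>v u) \<bullet> (A *\<^sub>v w)"
    using adjoint[of "M ^\<^sub>m i *\<^sub>v u" w] pow_mat_Suc_mult_vec[OF M u] M u Suc.prems by simp
  finally show ?case .
qed

lemma form_pow_mat_parity:
  fixes A M :: "'a::comm_ring_1 mat"
  assumes A: "A \<in> carrier_mat n n" and M: "M \<in> carrier_mat n n" and A_alt: "alternating_mat A"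
    and A_sym: "transpose_mat A = A" and M_sym: "B_symmetric A M" and Y: "Y \<in> carrier_vec n"
  shows "(A *\<^sub>v Y) \<bullet> (M ^\<^sub>m j *\<^sub>v Y) =
    (if even j then 0 else (M ^\<^sub>m (j div 2) *\<^sub>v Y) \<bullet> ((A * M) *\<^sub>v (M ^\<^sub>m (j div 2) *\<^sub>v Y)))"
proof -
  let ?i = "j div 2"
  have "(A *\<^sub>v Y) \<bullet> (M ^\<^sub>m j *\<^sub>v Y) = Y \<bullet> (A *\<^sub>v (M ^\<^sub>m ?i *\<^sub>v (M ^\<^sub>m (j - ?i) *\<^sub>v Y)))"
    using transpose_vec_mult_scalar[OF A _ Y, of "M ^\<^sub>m j *\<^sub>v Y"] pow_mat_add_mult_vec[OF M Y, of ?i "j - ?i"]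
      A_sym M Y by simp
  also have "\<dots> = (M ^\<^sub>m ?i *\<^sub>v Y) \<bullet> (A *\<^sub>v (M ^\<^sub>m (j - ?i) *\<^sub>v Y))"
    using form_pow_mat_adjoint[OF A M A_sym M_sym Y] M Y by simp
  also have "\<dots> = (if even j then 0 else (M ^\<^sub>m ?i *\<^sub>v Y) \<bullet> ((A * M) *\<^sub>v (M ^\<^sub>m ?i *\<^sub>v Y)))"
  proof (cases "even j")
    case True
    then have "j - ?i = ?i" by auto
    then show ?thesis
      using True A_alt A M Y unfolding alternating_mat_def by simp
  next
    case False
    then have "j - ?i = Suc ?i" by presburger
    then show ?thesis
      using False pow_mat_Suc_mult_vec[OF M Y, of ?i] A M Y by simp
  qed
  finally show ?thesis .
qed

lemma ex_last_nonzero: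
  fixes f :: "nat \<Rightarrow> 'a::zero"
  assumes "f k \<noteq> 0" and "\<And>j. m \<le> j \<Longrightarrow> f j = 0"
  shows "\<exists>r. f r \<noteq> 0 \<and> (\<forall>j>r. f j = 0)"
proof -
  have bound: "\<forall>j. f j \<noteq> 0 \<longrightarrow> j \<le> m"
    using assms(2) by (meson nle_le)
  let ?r = "GREATEST j. f j \<noteq> 0"
  have "f ?r \<noteq> 0"
    using GreatestI_nat[of "\<lambda>j. f j \<noteq> 0" k m] assms(1) bound by blast
  moreover have "f j = 0" if "j > ?r" for j
    using Greatest_le_nat[of "\<lambda>j. f j \<noteq> 0" j m] bound that by force
  ultimately show ?thesis by blast
qed

lemma nilpotent_MX_if_B_alternating:
  fixes A M :: "'a::comm_ring_1 mat"
  assumes A: "A \<in> carrier_mat n n" and M: "M \<in> carrier_mat n n" and A_alt: "alternating_mat A"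
    and A_sym: "transpose_mat A = A" and M_sym: "B_symmetric A M" and M_nil: "nilpotent_mat M"
    and M_alt: "B_alternating A M" and X: "X \<in> carrier_vec n"
  shows "nilpotent_mat (MX A M X)"
proof -
  obtain m where M_pow: "M ^\<^sub>m m = 0\<^sub>m n n"
    using M_nil M unfolding nilpotent_mat_def by auto
  have "(A *\<^sub>v X) \<bullet> (M ^\<^sub>m j *\<^sub>v X) = 0" for j
    using form_pow_mat_parity[OF A M A_alt A_sym M_sym X, of j] M_alt A M X
    unfolding B_alternating_def alternating_mat_def by simp
  then have "bordered_mat (A *\<^sub>v X) X M ^\<^sub>m (m + Suc m) = 0\<^sub>m (Suc n) (Suc n)"
    using A X by (intro bordered_mat_pow_eq_zero[OF _ X M M_pow]) simp_all
  moreover have "bordered_mat (A *\<^sub>v X) X M \<in> carrier_mat (Suc n) (Suc n)"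
    using A X M by (intro bordered_mat_carrier) simp_all
  ultimately show ?thesis
    unfolding nilpotent_mat_def MX_eq_bordered_mat[OF A X] by (metis carrier_matD)
qed

lemma B_alternating_if_nilpotent_MX:
  fixes A M :: "'a::idom mat"
  assumes A: "A \<in> carrier_mat n n" and M: "M \<in> carrier_mat n n" and A_alt: "alternating_mat A"
    and A_sym: "transpose_mat A = A" and M_sym: "B_symmetric A M" and M_nil: "nilpotent_mat M"
    and MX_nil: "\<forall>X \<in> carrier_vec n. nilpotent_mat (MX A M X)"
  shows "B_alternating A M"
proof (rule ccontr)
  define q where "q v = v \<bullet> ((A * M) *\<^sub>v v)" for v
  assume "\<not> B_alternating A M"
  then obtain X where X: "X \<in> carrier_vec n" and "q X \<noteq> 0"
    using A M unfolding B_alternating_def alternating_mat_def q_def by auto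
  obtain m where M_pow: "M ^\<^sub>m m = 0\<^sub>m n n"
    using M_nil M unfolding nilpotent_mat_def by auto
  have "q (M ^\<^sub>m k *\<^sub>v X) = 0" if "m \<le> k" for k
    using pow_mat_add_mult_vec[OF M X, of "k - m" m] that M_pow A M X by (simp add: q_def)
  then obtain r where r: "q (M ^\<^sub>m r *\<^sub>v X) \<noteq> 0" and r_last: "\<And>j. r < j \<Longrightarrow> q (M ^\<^sub>m j *\<^sub>v X) = 0"
    using ex_last_nonzero[of "\<lambda>k. q (M ^\<^sub>m k *\<^sub>v X)" 0 m] \<open>q X \<noteq> 0\<close> M X by auto
  define Y where "Y = M ^\<^sub>m r *\<^sub>v X"
  have Y: "Y \<in> carrier_vec n" unfolding Y_def using M X by simp
  have form: "(A *\<^sub>v Y) \<bullet> (M ^\<^sub>m j *\<^sub>v Y) = (if even j then 0 else q (M ^\<^sub>m (r + j div 2) *\<^sub>v X))" for j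
    using form_pow_mat_parity[OF A M A_alt A_sym M_sym Y, of j] pow_mat_add_mult_vec[OF M X, of "j div 2" r]
    by (simp add: q_def Y_def add.commute)
  have "\<not> nilpotent_mat (bordered_mat (A *\<^sub>v Y) Y M)"
  proof (rule bordered_mat_not_nilpotent[OF _ Y M])
    show "(A *\<^sub>v Y) \<bullet> (M *\<^sub>v Y) \<noteq> 0"
      using form[of 1] r M Y by (simp add: Y_def)
    show "(A *\<^sub>v Y) \<bullet> (M ^\<^sub>m j *\<^sub>v Y) = 0" if "2 \<le> j" for j
      using form[of j] r_last[of "r + j div 2"] that by auto
  qed (use form[of 0] A Y M in simp_all)
  then show False
    using MX_nil Y MX_eq_bordered_mat[OF A Y] by metis
qed

lemma B_alternating_MX:
  fixes A M :: "'a::comm_ring_1 mat"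
  assumes char2: "CHAR('a) = 2" and A: "A \<in> carrier_mat n n" and M: "M \<in> carrier_mat n n"
    and A_sym: "transpose_mat A = A" and M_alt: "B_alternating A M" and X: "X \<in> carrier_vec n"
  shows "B_alternating (four_block_mat (1\<^sub>m 1) (0\<^sub>m 1 n) (0\<^sub>m n 1) A) (MX A M X)"
proof -
  let ?S = "four_block_mat (1\<^sub>m 1) (0\<^sub>m 1 n) (0\<^sub>m n 1) A" and ?N = "MX A M X"
  have S: "?S \<in> carrier_mat (Suc n) (Suc n)"
    using four_block_carrier_mat[of "1\<^sub>m 1" 1 1 A n n] A by simp
  have N: "?N \<in> carrier_mat (Suc n) (Suc n)"
    using bordered_mat_carrier[of "A *\<^sub>v X" n X M] A M X MX_eq_bordered_mat[OF A X] by simp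
  have S_vCons: "?S *\<^sub>v vCons t z = vCons t (A *\<^sub>v z)" if "z \<in> carrier_vec n" for t z
    using four_block_mat_mult_vCons[of "1\<^sub>m 1" "0\<^sub>m 1 n" n "0\<^sub>m n 1" A z t] A that by simp
  have "u \<bullet> ((?S * ?N) *\<^sub>v u) = 0" if "u \<in> carrier_vec (Suc n)" for u
  proof -
    obtain s v where u: "u = vCons s v" and v: "v \<in> carrier_vec n"
      using \<open>u \<in> carrier_vec (Suc n)\<close> by (cases u) auto
    define t where "t = (A *\<^sub>v X) \<bullet> v"
    have "(?S * ?N) *\<^sub>v u = vCons t (s \<cdot>\<^sub>v (A *\<^sub>v X) + A *\<^sub>v (M *\<^sub>v v))"
      using S_vCons bordered_mat_mult_vCons[of "A *\<^sub>v X" n X M v s] MX_eq_bordered_mat[OF A X]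
        S N A M X u v by (simp add: t_def mult_add_distrib_mat_vec[OF A] mult_mat_smult_vec[OF A])
    then have "u \<bullet> ((?S * ?N) *\<^sub>v u) = s * t + (s * (v \<bullet> (A *\<^sub>v X)) + v \<bullet> ((A * M) *\<^sub>v v))"
      using u v A M X by (simp add: scalar_prod_add_distrib[of v n])
    also have "v \<bullet> (A *\<^sub>v X) = t"
      using comm_scalar_prod[OF v, of "A *\<^sub>v X"] A X by (simp add: t_def)
    also have "v \<bullet> ((A * M) *\<^sub>v v) = 0"
      using M_alt A M v unfolding B_alternating_def alternating_mat_def by simp
    finally show ?thesis
      using uminus_CHAR_2[OF char2, of "s * t"] by simp
  qed
  then show ?thesis
    using S N A unfolding B_alternating_def alternating_mat_def by simp
qed

theorem lemma3p1:
  fixes A M :: "'a::field mat" and n :: nat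
  assumes char2: "CHAR('a) = 2"
    and n: "n \<ge> 1"
    and A: "A \<in> carrier_mat n n" and A_inv: "invertible_mat A" and A_alt: "alternating_mat A"
    and M: "M \<in> carrier_mat n n" and M_nil: "nilpotent_mat M" and M_sym: "B_symmetric A M"
  shows "(B_alternating A M \<longleftrightarrow> (\<forall>X \<in> carrier_vec n. nilpotent_mat (MX A M X)))
    \<and> (B_alternating A M \<longrightarrow>
         (\<forall>X \<in> carrier_vec n.
            B_alternating (four_block_mat (1\<^sub>m 1) (0\<^sub>m 1 n) (0\<^sub>m n 1) A) (MX A M X)))"
proof -
  have A_sym: "transpose_mat A = A"
    by (rule alternating_mat_symmetric[OF char2 A_alt])
  show ?thesis
    using nilpotent_MX_if_B_alternating[OF A M A_alt A_sym M_sym M_nil]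
      B_alternating_if_nilpotent_MX[OF A M A_alt A_sym M_sym M_nil]
      B_alternating_MX[OF char2 A M A_sym]
    by blast
qed

end
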